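(* There exist constants $C_1,C_2>0$ such that for all $(\lambda,\zeta)\in\mathbb{S}\times(\mathbb{Z}^2\setminus\{0\})$, $$\frac{C_1}{\langle\omega\rangle^2}\le\Big|\int_0^a(\omega^2-\nu\partial_{zz})^{-1}(1)\,dz\Big|\le\frac{C_2}{\langle\omega\rangle^2},$$ where $(\omega^2-\nu\partial_{zz})^{-1}(1)$ denotes the solution $g$ on $(0,a)$ of $\omega^2g-\nu g''=1$, $g(0)=g(a)=0$.
   Context: Fix $a>0$, $\nu>0$, $\alpha\in\mathbb{R}$, $\beta,\gamma>0$, $\Omega=\mathbb{T}^2\times(0,a)$, $\mathbb{T}^2=(\mathbb{R}/2\pi\mathbb{Z})^2$. Let $\mathcal{V}=\mathcal{V}_1\times\mathcal{V}_2$, where $\mathcal{V}_1$ is the closure in $H^1(\Omega)^2$ of smooth $(u,v)$ periodic in $x,y$, vanishing at $z=0,a$, with $\int_0^a(\partial_xu+\partial_yv)dz=0$, and $\mathcal{V}_2$ the closure in $H^1(\Omega)$ of smooth $\theta$ periodic in $x,y$ vanishing at $z=0,a$. For $X=(u,v,\theta),X'=(u',v',\theta')\in\mathcal{V}$ put $(X,X')_{\mathcal{H}}=\int_\Omega(u\bar u'+v\bar v'+\frac\beta\gamma\theta\bar\theta')$, $(X,X')_{\mathcal{V}}=\int_\Omega(\nabla u\cdot\nabla\bar u'+\nabla v\cdot\nabla\bar v'+\frac\beta\gamma\nabla\theta\cdot\nabla\bar\theta')$, $w=-\int_0^z(\partial_xu+\partial_yv)$, $w'=-\int_0^z(\partial_xu'+\partial_yv')$,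 $B(X,X')=-\int_\Omega\theta\bar w'+\int_\Omega w\bar\theta'$, $C(X,X')=-\int_\Omega v\bar u'+\int_\Omega u\bar v'$, $\langle PX,X'\rangle=\nu(X,X')_{\mathcal{V}}+\beta B(X,X')+\alpha C(X,X')$, and $\mathbb{V}_P=\{\lambda\in\mathbb{C}:\exists X\in\mathcal{V}\setminus\{0\},\ \lambda(X,X')_{\mathcal{H}}+\langle PX,X'\rangle=0\ \forall X'\in\mathcal{V}\}$. Let $\mathbb{S}=\{-\delta_2-\mu_1+i\mu_2:(\mu_1,\mu_2)\in\mathbb{R}^2,\ |\mu_2|\ge\mu_1/\delta_1\}$, where $\delta_1>0$ is small enough that $\mathbb{S}\cap\mathbb{V}_P=\emptyset$ and $\delta_2<\min(\frac{\nu\pi^2}{2a^2},\frac\nu2)$. For $\lambda\in\mathbb{S}$, $\zeta\in\mathbb{Z}^2$: $\omega^2=\lambda+\nu|\zeta|^2$, $\langle\zeta\rangle=1+|\zeta|$, $\langle\omega\rangle^2=|\lambda|+\langle\zeta\rangle^2$. *)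

theory Defs
  imports "HOL-Analysis.Analysis"
begin

definition sectorS :: "real \<Rightarrow> real \<Rightarrow> complex set" where
  "sectorS d1 d2 = {complex_of_real (- d2 - mu1) + \<i> * complex_of_real mu2 | mu1 mu2.
                      \<bar>mu2\<bar> \<ge> mu1 / d1}"

definition zeta_sq :: "int \<times> int \<Rightarrow> real" where
  "zeta_sq z = real_of_int (fst z)^2 + real_of_int (snd z)^2"

definition omega_sq :: "real \<Rightarrow> complex \<Rightarrow> int \<times> int \<Rightarrow> complex" where
  "omega_sq nu lam z = lam + complex_of_real (nu * zeta_sq z)"

definition jbr_zeta :: "int \<times> int \<Rightarrow> real" where
  "jbr_zeta z = 1 + sqrt (zeta_sq z)"

definition jbr_omega_sq :: "complex \<Rightarrow> int \<times> int \<Rightarrow> real" where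
  "jbr_omega_sq lam z = cmod lam + (jbr_zeta z)^2"

definition dirichlet_sol :: "real \<Rightarrow> real \<Rightarrow> complex \<Rightarrow> (real \<Rightarrow> complex) \<Rightarrow> bool" where
  "dirichlet_sol a nu w g \<longleftrightarrow>
     (\<exists>g' g''. (\<forall>x\<in>{0..a}. (g has_vector_derivative g' x) (at x within {0..a}))
             \<and> continuous_on {0..a} g'
             \<and> (\<forall>x\<in>{0<..<a}. (g' has_vector_derivative g'' x) (at x)
                              \<and> w * g x - complex_of_real nu * g'' x = 1)
             \<and> g 0 = 0 \<and> g a = 0)"

end

theory Submission
  imports Defs
begin

text \<open>Write \<open>\<omega>\<^sup>2 = \<nu> k\<^sup>2\<close> with \<open>Re k > 0\<close>. The Dirichlet problem then has the unique solution
  \<open>g z = (1 - (e\<^sup>k\<^sup>z + e\<^sup>k\<^sup>(\<^sup>a\<^sup>-\<^sup>z\<^sup>)) / (1 + e\<^sup>k\<^sup>a)) / \<omega>\<^sup>2\<close>, whose integral is \<open>F(k) / \<omega>\<^sup>2\<close> with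
  \<open>F(k) = a - 2 tanh (k a / 2) / k\<close>. For \<open>\<lambda> \<in> S\<close> and \<open>\<zeta> \<noteq> 0\<close> the number \<open>\<omega>\<^sup>2\<close> lies in a sector
  \<open>Re w + \<delta>\<^sub>1 |Im w| \<ge> \<nu> |\<zeta>|\<^sup>2 / 2\<close>, so \<open>k\<close> ranges over a region with \<open>Re k\<close> bounded away from \<open>0\<close>.
  There \<open>F\<close> is continuous, never vanishes and tends to \<open>a\<close> at infinity, hence \<open>|F|\<close> is bounded
  above and below; and in that sector \<open>|\<omega>\<^sup>2|\<close> is comparable to \<open>\<langle>\<omega>\<rangle>\<^sup>2\<close>.\<close>

lemma one_add_exp_neq_zero:
  fixes z :: complex
  assumes "Re z \<noteq> 0"
  shows "1 + exp z \<noteq> 0"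
proof
  assume "1 + exp z = 0"
  then have "cmod (exp z) = 1"
    by (simp add: add_eq_0_iff)
  with assms show False
    by simp
qed

lemma constant_on_Icc_if_vector_derivative_zero:
  fixes U :: "real \<Rightarrow> 'a::banach"
  assumes "continuous_on {a..b} U"
    and "\<And>x. x \<in> {a<..<b} \<Longrightarrow> (U has_vector_derivative 0) (at x)"
    and "x \<in> {a..b}"
  shows "U x = U a"
proof (rule has_derivative_zero_unique_strong_interval[of "{a, b}" a b U])
  fix y assume "y \<in> {a..b} - {a, b}"
  then have y: "y \<in> {a<..<b}"
    by auto
  then have "at y within {a..b} = at y"
    by (simp add: at_within_Icc_at)
  with assms(2)[OF y] show "(U has_derivative (\<lambda>h. 0)) (at y within {a..b})"
    by (simp add: has_vector_derivative_def)
qed (use assms in auto)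

definition dirichlet_profile :: "real \<Rightarrow> complex \<Rightarrow> real \<Rightarrow> complex" where
  "dirichlet_profile a k x =
     1 - (exp (k * of_real x) + exp (k * (of_real a - of_real x))) / (1 + exp (k * of_real a))"

definition dirichlet_profile_integral :: "real \<Rightarrow> complex \<Rightarrow> complex" where
  "dirichlet_profile_integral a k =
     of_real a - 2 * (exp (k * of_real a) - 1) / (k * (1 + exp (k * of_real a)))"

lemma dirichlet_sol_profile:
  assumes a: "a > 0" and nu: "nu > 0" and k: "Re k > 0" and w: "of_real nu * k^2 = w"
  shows "dirichlet_sol a nu w (\<lambda>x. dirichlet_profile a k x / w)"
proof -
  define D where "D = 1 + exp (k * of_real a)"
  have D0: "D \<noteq> 0"
    unfolding D_def using a k by (intro one_add_exp_neq_zero) simp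
  have w0: "w \<noteq> 0"
    using k nu w by auto
  define G where "G c = (1 - (exp (k * c) + exp (k * (of_real a - c))) / D) / w" for c
  define G' where "G' c = - ((k * exp (k * c) - k * exp (k * (of_real a - c))) / D) / w" for c
  define G'' where "G'' c = - ((k^2 * exp (k * c) + k^2 * exp (k * (of_real a - c))) / D) / w" for c
  have "(G has_field_derivative G' c) (at c)" for c
    unfolding G_def G'_def using D0 w0 by (auto intro!: derivative_eq_intros simp: field_simps)
  from has_vector_derivative_real_field[OF this]
  have dG: "((\<lambda>x. G (of_real x)) has_vector_derivative G' (of_real x)) (at x within S)" for x S .
  have "(G' has_field_derivative G'' c) (at c)" for c
    unfolding G'_def G''_def using D0 w0
    by (auto intro!: derivative_eq_intros simp: field_simps power2_eq_square)
  from has_vector_derivative_real_field[OF this]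
  have dG': "((\<lambda>x. G' (of_real x)) has_vector_derivative G'' (of_real x)) (at x)" for x
    by simp
  have ode: "w * G c - of_real nu * G'' c = 1" for c
    unfolding G_def G''_def using w0 D0 w[symmetric] by (simp add: field_simps)
  have cont: "continuous_on {0..a} (\<lambda>x. G' (of_real x))"
    unfolding G'_def by (intro continuous_intros) (use D0 w0 in auto)
  have bc: "G 0 = 0" "G (of_real a) = 0"
    using D0 by (simp_all add: G_def D_def add.commute)
  have profile: "(\<lambda>x. dirichlet_profile a k x / w) = (\<lambda>x. G (of_real x))"
    by (simp add: dirichlet_profile_def G_def D_def)
  show ?thesis
    unfolding profile dirichlet_sol_def using dG dG' ode cont bc
    by (intro exI[of _ "\<lambda>x. G' (of_real x)"] exI[of _ "\<lambda>x. G'' (of_real x)"] conjI ballI) auto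
qed

lemma integral_dirichlet_profile:
  assumes a: "a > 0" and k: "Re k > 0"
  shows "integral {0..a} (dirichlet_profile a k) = dirichlet_profile_integral a k"
proof -
  define D where "D = 1 + exp (k * of_real a)"
  have D0: "D \<noteq> 0"
    unfolding D_def using a k by (intro one_add_exp_neq_zero) simp
  have k0: "k \<noteq> 0"
    using k by auto
  define P where "P c = c - (exp (k * c) - exp (k * (of_real a - c))) / (k * D)" for c
  have dP: "(P has_field_derivative 1 - (exp (k * c) + exp (k * (of_real a - c))) / D) (at c)" for c
    unfolding P_def using k0 D0 by (auto intro!: derivative_eq_intros simp: field_simps)
  have "(dirichlet_profile a k has_integral P (of_real a) - P (of_real 0)) {0..a}"
    unfolding dirichlet_profile_def D_def
    by (intro fundamental_theorem_of_calculus)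
      (use a has_vector_derivative_real_field[OF dP] in \<open>auto simp: D_def\<close>)
  moreover have "P (of_real a) - P (of_real 0) = dirichlet_profile_integral a k"
    unfolding P_def dirichlet_profile_integral_def D_def[symmetric] using k0 D0
    by (simp add: field_simps)
  ultimately show ?thesis
    by (simp add: integral_unique)
qed

text \<open>The first integrals \<open>(h' \<plusminus> k h) exp (\<mp> k x)\<close> are constant; at \<open>x = a\<close> they give
  \<open>h'(a) e\<^sup>k\<^sup>a = h'(0) = h'(a) e\<^sup>-\<^sup>k\<^sup>a\<close>, which forces \<open>h'(0) = 0\<close> because \<open>|e\<^sup>k\<^sup>a| > 1\<close>.\<close>

lemma homogeneous_dirichlet_sol_zero:
  fixes h h' h'' :: "real \<Rightarrow> complex"
  assumes a: "a > 0" and k: "Re k > 0"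
    and dh: "\<And>x. x \<in> {0..a} \<Longrightarrow> (h has_vector_derivative h' x) (at x within {0..a})"
    and h'_cont: "continuous_on {0..a} h'"
    and dh': "\<And>x. x \<in> {0<..<a} \<Longrightarrow> (h' has_vector_derivative h'' x) (at x)"
    and ode: "\<And>x. x \<in> {0<..<a} \<Longrightarrow> h'' x = k^2 * h x"
    and bc: "h 0 = 0" "h a = 0"
    and x: "x \<in> {0..a}"
  shows "h x = 0"
proof -
  have h_cont: "continuous_on {0..a} h"
    using dh by (rule continuous_on_vector_derivative)
  have dh_open: "(h has_vector_derivative h' x) (at x)" if "x \<in> {0<..<a}" for x
    using dh[of x] that by (simp add: at_within_Icc_at)
  have dexp: "((\<lambda>x. exp (c * of_real x)) has_vector_derivative c * exp (c * of_real x)) (at x)"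
    for c :: complex and x :: real
    by (rule has_vector_derivative_real_field) (auto intro!: derivative_eq_intros)
  have first_integral: "(h' y + c * h y) * exp (- c * of_real y) = h' 0"
    if c: "c = k \<or> c = - k" and y: "y \<in> {0..a}" for c y
  proof -
    have "(h' y + c * h y) * exp (- c * of_real y) = (h' 0 + c * h 0) * exp (- c * of_real 0)"
    proof (rule constant_on_Icc_if_vector_derivative_zero[OF _ _ y])
      show "continuous_on {0..a} (\<lambda>y. (h' y + c * h y) * exp (- c * of_real y))"
        using h_cont h'_cont by (intro continuous_intros)
      fix x assume x: "x \<in> {0<..<a}"
      have "c^2 = k^2"
        using c by auto
      let ?E = "exp (- c * of_real x)"
      have "((\<lambda>y. (h' y + c * h y) * exp (- c * of_real y)) has_vector_derivative
              (h' x + c * h x) * (- c * ?E) + (h'' x + c * h' x) * ?E) (at x)"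
        by (rule has_vector_derivative_mult[OF has_vector_derivative_add[OF dh'[OF x]
              has_vector_derivative_mult_right[OF dh_open[OF x]]] dexp])
      moreover have "(h' x + c * h x) * (- c * ?E) + (h'' x + c * h' x) * ?E = (h'' x - c^2 * h x) * ?E"
        by (simp add: algebra_simps power2_eq_square)
      ultimately show "((\<lambda>y. (h' y + c * h y) * exp (- c * of_real y)) has_vector_derivative 0) (at x)"
        using ode[OF x] \<open>c^2 = k^2\<close> by simp
    qed
    then show ?thesis
      using bc by simp
  qed
  have a_in: "a \<in> {0..a}"
    using a by simp
  have "h' a * exp (- k * of_real a) = h' 0" "h' a * exp (k * of_real a) = h' 0"
    using first_integral[OF _ a_in, of k] first_integral[OF _ a_in, of "- k"] bc by auto
  moreover have "exp (- k * of_real a) \<noteq> exp (k * of_real a)"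
  proof -
    have "cmod (exp (- k * of_real a)) < 1" "cmod (exp (k * of_real a)) > 1"
      using a k by simp_all
    then show ?thesis
      by (metis order.asym)
  qed
  ultimately have "h' 0 = 0"
    by (metis mult_left_cancel mult_zero_left)
  then have "h' x + k * h x = 0" "h' x - k * h x = 0"
    using first_integral[OF _ x, of k] first_integral[OF _ x, of "- k"] by auto
  then have "2 * k * h x = 0"
    by (simp add: algebra_simps)
  then show ?thesis
    using k by auto
qed

lemma dirichlet_sol_unique:
  assumes a: "a > 0" and nu: "nu > 0" and k: "Re k > 0" and w: "of_real nu * k^2 = w"
    and g1: "dirichlet_sol a nu w g1" and g2: "dirichlet_sol a nu w g2"
    and x: "x \<in> {0..a}"
  shows "g1 x = g2 x"
proof -
  obtain g1' g1'' where d1: "\<forall>x\<in>{0..a}. (g1 has_vector_derivative g1' x) (at x within {0..a})"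
    and c1: "continuous_on {0..a} g1'"
    and e1: "\<forall>x\<in>{0<..<a}. (g1' has_vector_derivative g1'' x) (at x) \<and> w * g1 x - of_real nu * g1'' x = 1"
    and b1: "g1 0 = 0" "g1 a = 0"
    using g1 unfolding dirichlet_sol_def by blast
  obtain g2' g2'' where d2: "\<forall>x\<in>{0..a}. (g2 has_vector_derivative g2' x) (at x within {0..a})"
    and c2: "continuous_on {0..a} g2'"
    and e2: "\<forall>x\<in>{0<..<a}. (g2' has_vector_derivative g2'' x) (at x) \<and> w * g2 x - of_real nu * g2'' x = 1"
    and b2: "g2 0 = 0" "g2 a = 0"
    using g2 unfolding dirichlet_sol_def by blast
  have ode: "g1'' y - g2'' y = k^2 * (g1 y - g2 y)" if "y \<in> {0<..<a}" for y
  proof -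
    have "of_real nu * (g1'' y - g2'' y) = of_real nu * (k^2 * (g1 y - g2 y))"
      using e1 e2 that w by (auto simp: algebra_simps)
    then show ?thesis
      using nu by simp
  qed
  have "g1 x - g2 x = 0"
    by (rule homogeneous_dirichlet_sol_zero[OF a k, of "\<lambda>y. g1 y - g2 y" "\<lambda>y. g1' y - g2' y"])
      (use d1 d2 c1 c2 e1 e2 b1 b2 ode x in \<open>auto intro!: derivative_eq_intros continuous_intros\<close>)
  then show ?thesis
    by simp
qed

lemma dirichlet_sol_integral:
  assumes a: "a > 0" and nu: "nu > 0" and k: "Re k > 0" and w: "of_real nu * k^2 = w"
  shows "\<exists>g. dirichlet_sol a nu w g"
    and "dirichlet_sol a nu w g \<Longrightarrow> integral {0..a} g = dirichlet_profile_integral a k / w"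
proof -
  let ?G = "\<lambda>x. dirichlet_profile a k x / w"
  show "\<exists>g. dirichlet_sol a nu w g"
    using dirichlet_sol_profile[OF assms] by blast
  assume "dirichlet_sol a nu w g"
  then have "integral {0..a} g = integral {0..a} ?G"
    by (intro integral_cong dirichlet_sol_unique[OF assms _ dirichlet_sol_profile[OF assms]])
  also have "\<dots> = dirichlet_profile_integral a k / w"
    using integral_dirichlet_profile[OF a k] by simp
  finally show "integral {0..a} g = dirichlet_profile_integral a k / w" .
qed

lemma less_sinh_real:
  fixes x :: real
  assumes "x > 0"
  shows "x < sinh x"
proof -
  have "sinh 0 - 0 < sinh x - x"
  proof (rule DERIV_pos_imp_increasing_open[OF assms])
    fix u :: real assume "0 < u" "u < x"
    then have "cosh u - 1 > 0"
      using cosh_real_nonneg_less_iff[of 0 u] by simp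
    moreover have "((\<lambda>u. sinh u - u) has_real_derivative cosh u - 1) (at u)"
      by (auto intro!: derivative_eq_intros)
    ultimately show "\<exists>y. ((\<lambda>u. sinh u - u) has_real_derivative y) (at u) \<and> 0 < y"
      by blast
  qed (intro continuous_intros)
  then show ?thesis
    by simp
qed

lemma tanh_less_real:
  fixes x :: real
  assumes "x > 0"
  shows "tanh x < x"
proof -
  have "0 - tanh 0 < x - tanh x"
  proof (rule DERIV_pos_imp_increasing_open[OF assms])
    fix u :: real assume "0 < u" "u < x"
    then have "tanh u ^ 2 > 0"
      by simp
    moreover have "((\<lambda>u. u - tanh u) has_real_derivative tanh u ^ 2) (at u)"
      by (auto intro!: derivative_eq_intros simp: cosh_real_pos[THEN less_imp_neq, symmetric])
    ultimately show "\<exists>y. ((\<lambda>u. u - tanh u) has_real_derivative y) (at u) \<and> 0 < y"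
      by blast
  qed (intro continuous_intros, auto)
  then show ?thesis
    by simp
qed

text \<open>Equivalently \<open>t \<noteq> 2 tanh (t/2)\<close>. Writing \<open>t = x + i y\<close> and \<open>q = e\<^sup>-\<^sup>x\<close>, real and imaginary
  parts give \<open>y (1 - q\<^sup>2) = 2 x q sin y\<close>, impossible for \<open>y \<noteq> 0\<close> since \<open>2 x q < 1 - q\<^sup>2\<close> (that is,
  \<open>x < sinh x\<close>); for \<open>y = 0\<close> the equation reads \<open>tanh (x/2) = x/2\<close>.\<close>

lemma mult_one_add_exp_uminus_neq:
  fixes t :: complex
  assumes t: "Re t > 0"
  shows "t * (1 + exp (- t)) \<noteq> 2 * (1 - exp (- t))"
proof
  assume eq: "t * (1 + exp (- t)) = 2 * (1 - exp (- t))"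
  define x where "x = Re t"
  define y where "y = Im t"
  define q where "q = exp (- x)"
  have x: "x > 0" and q: "0 < q" "q < 1"
    using t by (auto simp: x_def q_def)
  define c where "c = Re (exp (- t))"
  define d where "d = Im (exp (- t))"
  have cd: "c = q * cos y" "d = - q * sin y"
    by (simp_all add: c_def d_def q_def x_def y_def Re_exp Im_exp)
  have cd2: "c^2 + d^2 = q^2"
    unfolding cd by (simp add: power_mult_distrib algebra_simps flip: distrib_left)
  have re: "x * (1 + c) - y * d = 2 * (1 - c)"
    using arg_cong[OF eq, of Re] by (simp add: c_def d_def x_def y_def)
  have im: "y * (1 + c) + x * d = - 2 * d"
    using arg_cong[OF eq, of Im] by (simp add: c_def d_def x_def y_def)
  define N where "N = (1 + c)^2 + d^2"
  have xN: "x * N = 2 * (1 - q^2)"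
    using cd2 re im unfolding N_def by algebra
  have yN: "y * N = 4 * q * sin y"
    using cd re im unfolding N_def by algebra
  have sinh: "2 * x * q < 1 - q^2"
  proof -
    have "1 - q^2 = 2 * q * sinh x"
      by (simp add: q_def sinh_def exp_minus field_simps power2_eq_square)
    then show ?thesis
      using less_sinh_real[OF x] q by simp
  qed
  have y0: "y = 0"
  proof (rule ccontr)
    assume "y \<noteq> 0"
    have "y * (1 - q^2) = 2 * x * q * sin y"
      using xN yN by algebra
    moreover have "1 - q^2 > 0"
      using sinh x q by (smt (verit) mult_pos_pos)
    ultimately have "\<bar>y\<bar> * (1 - q^2) = 2 * x * q * \<bar>sin y\<bar>"
      using x q by (metis abs_mult abs_of_pos mult_pos_pos zero_less_numeral)
    also have "\<dots> \<le> 2 * x * q * \<bar>y\<bar>"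
      using abs_sin_x_le_abs_x[of y] q x by (intro mult_left_mono) auto
    finally have "\<bar>y\<bar> * (1 - q^2) \<le> \<bar>y\<bar> * (2 * x * q)"
      by (simp add: algebra_simps)
    with \<open>y \<noteq> 0\<close> sinh show False
      by simp
  qed
  then have "N = (1 + q)^2"
    using cd by (simp add: N_def)
  then have "(1 + q) * (x * (1 + q) - 2 * (1 - q)) = 0"
    using xN by algebra
  then have "x * (1 + q) = 2 * (1 - q)"
    using q by simp
  then have "x / 2 = (1 - q) / (1 + q)"
    using q by (simp add: field_simps)
  moreover have "tanh (x / 2) = (1 - q) / (1 + q)"
    by (simp add: tanh_real_altdef q_def)
  moreover have "tanh (x / 2) < x / 2"
    using x by (intro tanh_less_real) simp
  ultimately show False
    by linarith
qed

lemma dirichlet_profile_integral_nonzero: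
  assumes a: "a > 0" and k: "Re k > 0"
  shows "dirichlet_profile_integral a k \<noteq> 0"
proof
  assume "dirichlet_profile_integral a k = 0"
  define t where "t = k * of_real a"
  have t: "Re t > 0"
    using a k by (simp add: t_def)
  have k0: "k \<noteq> 0"
    using k by auto
  have D0: "1 + exp t \<noteq> 0"
    using t by (intro one_add_exp_neq_zero) simp
  have "of_real a = 2 * (exp t - 1) / (k * (1 + exp t))"
    using \<open>dirichlet_profile_integral a k = 0\<close> by (simp add: dirichlet_profile_integral_def t_def)
  then have "of_real a * (k * (1 + exp t)) = 2 * (exp t - 1)"
    using k0 D0 by (simp add: eq_divide_eq)
  then have "t * (1 + exp t) = 2 * (exp t - 1)"
    by (simp add: t_def algebra_simps)
  then have "t * (1 + exp t) * exp (- t) = 2 * (exp t - 1) * exp (- t)"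
    by simp
  then have "t * (1 + exp (- t)) = 2 * (1 - exp (- t))"
    by (simp add: algebra_simps flip: exp_add)
  with mult_one_add_exp_uminus_neq[OF t] show False ..
qed

lemma sector_sqrt_Re_lower_bound:
  fixes k :: complex and d :: real
  assumes "1/2 \<le> Re (k^2) + d * \<bar>Im (k^2)\<bar>"
  shows "1 / (2 * (1 + d^2)) \<le> (Re k)^2"
proof -
  define p q where "p = Re k" and "q = Im k"
  have "d * \<bar>Im (k^2)\<bar> \<le> \<bar>d * Im (k^2)\<bar>"
    by (simp add: abs_mult mult_right_mono)
  also have "\<dots> = 2 * \<bar>d * p\<bar> * \<bar>q\<bar>"
    by (simp add: p_def q_def power2_eq_square abs_mult)
  also have "\<dots> \<le> q^2 + (d * p)^2"
    using sum_squares_bound[of "\<bar>d * p\<bar>" "\<bar>q\<bar>"] by (simp add: algebra_simps power2_abs)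
  finally have "1/2 \<le> (1 + d^2) * p^2"
    using assms by (simp add: p_def q_def power2_eq_square algebra_simps)
  moreover have "0 < 2 * (1 + d^2)"
    by (simp add: add_pos_nonneg)
  ultimately show ?thesis
    by (simp add: p_def pos_divide_le_eq algebra_simps)
qed

lemma norm_dirichlet_profile_integral_diff_le:
  assumes a: "a > 0" and p: "p > 0" and k: "Re k \<ge> p"
  shows "cmod (dirichlet_profile_integral a k - of_real a) \<le> 2 * (1 + 2 / (exp (p * a) - 1)) / cmod k"
proof -
  define E where "E = exp (k * of_real a)"
  define R where "R = exp (Re k * a)"
  have pa: "exp (p * a) > 1"
    using p a by simp
  have R: "R \<ge> exp (p * a)"
    using k a by (simp add: R_def mult_right_mono)
  then have R1: "R > 1"
    using pa by linarith
  have nE: "cmod E = R"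
    by (simp add: E_def R_def)
  have num: "cmod (E - 1) \<le> R + 1"
    using norm_triangle_ineq4[of E 1] nE by simp
  have den: "R - 1 \<le> cmod (1 + E)"
    using norm_diff_ineq[of E 1] nE by (simp add: add.commute)
  have k0: "cmod k > 0"
    using k p by auto
  have "cmod (dirichlet_profile_integral a k - of_real a) = cmod (2 * (E - 1) / (k * (1 + E)))"
    by (simp add: dirichlet_profile_integral_def E_def)
  also have "\<dots> = 2 * cmod (E - 1) / (cmod k * cmod (1 + E))"
    by (simp only: norm_divide norm_mult norm_numeral)
  also have "\<dots> \<le> 2 * (R + 1) / (cmod k * (R - 1))"
    using num den k0 R1 by (intro frac_le mult_left_mono) auto
  also have "\<dots> = 2 * (1 + 2 / (R - 1)) / cmod k"
    using R1 k0 by (simp add: field_simps)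
  also have "\<dots> \<le> 2 * (1 + 2 / (exp (p * a) - 1)) / cmod k"
    using R pa R1 k0 by (intro divide_right_mono mult_left_mono add_left_mono divide_left_mono) auto
  finally show ?thesis .
qed

text \<open>Away from the origin \<open>dirichlet_profile_integral a k\<close> is close to \<open>a\<close> by the estimate above;
  on the compact rest of the region it is continuous and nonvanishing.\<close>

lemma dirichlet_profile_integral_bounds:
  assumes a: "a > 0"
  obtains m M where "0 < m" "0 < M"
    and "\<And>k. Re k \<ge> 0 \<Longrightarrow> 1/2 \<le> Re (k^2) + d * \<bar>Im (k^2)\<bar> \<Longrightarrow>
           m \<le> cmod (dirichlet_profile_integral a k) \<and> cmod (dirichlet_profile_integral a k) \<le> M"
proof -
  define Reg where "Reg = {k. 0 \<le> Re k \<and> 1/2 \<le> Re (k^2) + d * \<bar>Im (k^2)\<bar>}"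
  define p where "p = sqrt (1 / (2 * (1 + d^2)))"
  have p: "p > 0"
    by (simp add: p_def add_pos_nonneg)
  have Re_ge: "Re k \<ge> p" if "k \<in> Reg" for k
    using that sector_sqrt_Re_lower_bound[of k d] unfolding Reg_def p_def
    by (auto intro: real_le_lsqrt)
  define B where "B = 2 * (1 + 2 / (exp (p * a) - 1))"
  have B: "B > 0"
    using p a by (simp add: B_def add_pos_pos)
  have far: "\<bar>cmod (dirichlet_profile_integral a k) - a\<bar> \<le> B / cmod k" if "k \<in> Reg" for k
    using norm_dirichlet_profile_integral_diff_le[OF a p Re_ge[OF that]]
      norm_triangle_ineq3[of "dirichlet_profile_integral a k" "of_real a"] a
    by (simp add: B_def)
  have norm_ge: "cmod k \<ge> p" if "k \<in> Reg" for k
    using Re_ge[OF that] complex_Re_le_cmod[of k] by linarith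
  define K where "K = 2 * B / a"
  define S where "S = cball 0 K \<inter> Reg"
  have S_pos: "Re k > 0" if "k \<in> S" for k
    using that Re_ge p unfolding S_def by force
  have compact: "compact S"
    unfolding S_def Reg_def
    by (intro compact_Int_closed compact_cball closed_Collect_conj closed_Collect_le continuous_intros)
  have cont: "continuous_on S (\<lambda>k. cmod (dirichlet_profile_integral a k))"
  proof -
    have "k \<noteq> 0 \<and> 1 + exp (k * of_real a) \<noteq> 0" if "k \<in> S" for k
      using S_pos[OF that] a by (auto intro!: one_add_exp_neq_zero)
    then show ?thesis
      unfolding dirichlet_profile_integral_def by (intro continuous_intros) auto
  qed
  obtain m0 where m0: "m0 > 0" "\<And>k. k \<in> S \<Longrightarrow> m0 \<le> cmod (dirichlet_profile_integral a k)"
  proof (cases "S = {}")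
    case True
    then show ?thesis
      using that[of 1] by simp
  next
    case False
    then obtain k0 where k0: "k0 \<in> S"
      and min: "\<And>k. k \<in> S \<Longrightarrow> cmod (dirichlet_profile_integral a k0) \<le> cmod (dirichlet_profile_integral a k)"
      using continuous_attains_inf[OF compact False cont] by blast
    have "dirichlet_profile_integral a k0 \<noteq> 0"
      by (rule dirichlet_profile_integral_nonzero[OF a S_pos[OF k0]])
    with min show ?thesis
      using that[of "cmod (dirichlet_profile_integral a k0)"] by simp
  qed
  show ?thesis
  proof
    show "0 < min m0 (a / 2)" "0 < a + B / p"
      using m0 a B p by (auto intro: add_pos_pos)
    fix k assume "Re k \<ge> 0" "1/2 \<le> Re (k^2) + d * \<bar>Im (k^2)\<bar>"
    then have k: "k \<in> Reg"
      by (simp add: Reg_def)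
    have "B / cmod k \<le> B / p"
      using norm_ge[OF k] p B by (intro divide_left_mono mult_pos_pos) auto
    then have upper: "cmod (dirichlet_profile_integral a k) \<le> a + B / p"
      using far[OF k] by linarith
    have lower: "min m0 (a / 2) \<le> cmod (dirichlet_profile_integral a k)"
    proof (cases "cmod k \<le> K")
      case True
      then show ?thesis
        using m0 k by (fastforce simp: S_def)
    next
      case False
      then have "B / cmod k \<le> B / K"
        using B a by (intro divide_left_mono mult_pos_pos) (auto simp: K_def)
      also have "\<dots> = a / 2"
        using B a by (simp add: K_def)
      finally show ?thesis
        using far[OF k] by linarith
    qed
    from lower upper show "min m0 (a / 2) \<le> cmod (dirichlet_profile_integral a k) \<and>
        cmod (dirichlet_profile_integral a k) \<le> a + B / p" ..
  qed
qed

lemma zeta_sq_ge_one: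
  assumes "z \<noteq> (0, 0)"
  shows "1 \<le> zeta_sq z"
proof -
  obtain u v where z: "z = (u, v)"
    by (cases z)
  then have "u \<noteq> 0 \<or> v \<noteq> 0"
    using assms by auto
  then have "1 \<le> real_of_int u ^ 2 \<or> 1 \<le> real_of_int v ^ 2"
    by (metis of_int_1_le_iff of_int_power one_le_power abs_ge_zero int_one_le_iff_zero_less
        zero_less_abs_iff power2_abs)
  then show ?thesis
    unfolding zeta_sq_def z by (auto intro: add_increasing add_increasing2)
qed

lemma sector_omega_sq_lower_bound:
  assumes nu: "nu \<ge> 0" and d1: "d1 > 0" and d2: "d2 < nu / 2"
    and lam: "lam \<in> sectorS d1 d2" and z: "z \<noteq> (0, 0)"
  shows "nu * zeta_sq z / 2 \<le> Re (omega_sq nu lam z) + d1 * \<bar>Im (omega_sq nu lam z)\<bar>"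
proof -
  obtain mu1 mu2 where lam_eq: "lam = of_real (- d2 - mu1) + \<i> * of_real mu2"
    and mu: "mu1 / d1 \<le> \<bar>mu2\<bar>"
    using lam unfolding sectorS_def by blast
  have "mu1 \<le> d1 * \<bar>mu2\<bar>"
    using mu d1 by (simp add: field_simps)
  moreover have "nu \<le> nu * zeta_sq z"
    using zeta_sq_ge_one[OF z] nu by (simp add: mult_le_cancel_left1)
  ultimately show ?thesis
    using d2 by (simp add: omega_sq_def lam_eq)
qed

lemma norm_omega_sq_le_jbr_omega_sq:
  assumes "nu \<ge> 0"
  shows "cmod (omega_sq nu lam z) \<le> max 1 nu * jbr_omega_sq lam z"
proof -
  have Z: "zeta_sq z \<le> (jbr_zeta z)^2"
    by (simp add: jbr_zeta_def zeta_sq_def power2_eq_square algebra_simps)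
  have "cmod (of_real (nu * zeta_sq z) :: complex) = nu * zeta_sq z"
    using assms by (simp only: norm_of_real) (simp add: zeta_sq_def)
  then have "cmod (omega_sq nu lam z) \<le> cmod lam + nu * zeta_sq z"
    using norm_triangle_ineq[of lam "of_real (nu * zeta_sq z)"] by (simp only: omega_sq_def)
  also have "\<dots> \<le> max 1 nu * cmod lam + max 1 nu * (jbr_zeta z)^2"
    using Z assms mult_right_mono[of 1 "max 1 nu" "cmod lam"]
    by (intro add_mono mult_mono) (auto simp: zeta_sq_def)
  finally show ?thesis
    by (simp add: jbr_omega_sq_def distrib_left)
qed

lemma jbr_omega_sq_le_norm_omega_sq:
  assumes nu: "nu > 0" and d1: "d1 > 0" and z: "z \<noteq> (0, 0)"
    and w: "nu * zeta_sq z / 2 \<le> Re (omega_sq nu lam z) + d1 * \<bar>Im (omega_sq nu lam z)\<bar>"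
  shows "jbr_omega_sq lam z \<le> (1 + (nu + 4) * (2 * (1 + d1) / nu)) * cmod (omega_sq nu lam z)"
proof -
  define Z where "Z = zeta_sq z"
  define w where "w = omega_sq nu lam z"
  have Z1: "1 \<le> Z"
    using zeta_sq_ge_one[OF z] by (simp add: Z_def)
  have "Re w + d1 * \<bar>Im w\<bar> \<le> cmod w + d1 * cmod w"
    using complex_Re_le_cmod[of w] abs_Im_le_cmod[of w] d1 by (intro add_mono mult_left_mono) auto
  then have "nu * Z / 2 \<le> (1 + d1) * cmod w"
    using w unfolding Z_def w_def by (simp add: algebra_simps)
  then have Zw: "Z \<le> 2 * (1 + d1) / nu * cmod w"
    using nu by (simp add: field_simps)
  have jbr: "(jbr_zeta z)^2 \<le> 4 * Z"
  proof -
    have "sqrt Z \<le> Z"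
      using Z1 real_sqrt_le_mono[of Z "Z^2"] by (simp add: power2_eq_square)
    then show ?thesis
      using Z1 by (simp add: jbr_zeta_def Z_def power2_eq_square algebra_simps)
  qed
  have "lam = w - of_real (nu * Z)"
    by (simp add: w_def Z_def omega_sq_def)
  then have "cmod lam \<le> cmod w + cmod (of_real (nu * Z) :: complex)"
    by (metis norm_triangle_ineq4)
  moreover have "cmod (of_real (nu * Z) :: complex) = nu * Z"
    using nu Z1 by (simp only: norm_of_real) simp
  ultimately have "cmod lam \<le> cmod w + nu * Z"
    by linarith
  then have "jbr_omega_sq lam z \<le> cmod w + (nu + 4) * Z"
    using jbr by (simp add: jbr_omega_sq_def algebra_simps)
  also have "\<dots> \<le> cmod w + (nu + 4) * (2 * (1 + d1) / nu * cmod w)"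
    using Zw nu by (intro add_left_mono mult_left_mono) auto
  finally show ?thesis
    by (simp add: w_def algebra_simps)
qed

lemma jbr_omega_sq_pos: "0 < jbr_omega_sq lam z"
proof -
  have "0 \<le> sqrt (zeta_sq z)"
    by (simp add: zeta_sq_def)
  then have "0 < jbr_zeta z"
    unfolding jbr_zeta_def by linarith
  then show ?thesis
    by (simp add: jbr_omega_sq_def add_nonneg_pos)
qed

lemma sector_csqrt_omega_sq:
  assumes nu: "nu > 0" and d1: "d1 > 0" and d2: "d2 < nu / 2"
    and lam: "lam \<in> sectorS d1 d2" and z: "z \<noteq> (0, 0)"
  defines "k \<equiv> csqrt (omega_sq nu lam z / of_real nu)"
  shows "of_real nu * k^2 = omega_sq nu lam z"
    and "1/2 \<le> Re (k^2) + d1 * \<bar>Im (k^2)\<bar>"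
    and "Re k > 0"
proof -
  define w where "w = omega_sq nu lam z"
  show "of_real nu * k^2 = omega_sq nu lam z"
    using nu by (simp add: k_def)
  have "nu \<le> nu * zeta_sq z"
    using zeta_sq_ge_one[OF z] nu by simp
  then have "nu / 2 \<le> Re w + d1 * \<bar>Im w\<bar>"
    using sector_omega_sq_lower_bound[OF _ d1 d2 lam z] nu unfolding w_def by linarith
  then show region: "1/2 \<le> Re (k^2) + d1 * \<bar>Im (k^2)\<bar>"
    using nu by (simp add: k_def w_def abs_div field_simps)
  have "0 < 1 / (2 * (1 + d1^2))"
    by (simp add: add_pos_nonneg)
  then have "Re k \<noteq> 0"
    using sector_sqrt_Re_lower_bound[OF region] by auto
  moreover have "Re k \<ge> 0"
    unfolding k_def by (rule Re_csqrt)
  ultimately show "Re k > 0"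
    by simp
qed

lemma integral_dirichlet_sol_sector_bounds:
  assumes a: "a > 0" and nu: "nu > 0" and d1: "d1 > 0" and d2: "d2 < nu / 2"
    and lam: "lam \<in> sectorS d1 d2" and z: "z \<noteq> (0, 0)"
    and m: "0 < m"
    and F_bounds: "\<And>k. Re k \<ge> 0 \<Longrightarrow> 1/2 \<le> Re (k^2) + d1 * \<bar>Im (k^2)\<bar> \<Longrightarrow>
       m \<le> cmod (dirichlet_profile_integral a k) \<and> cmod (dirichlet_profile_integral a k) \<le> M"
    and g: "dirichlet_sol a nu (omega_sq nu lam z) g"
  shows "m / max 1 nu / jbr_omega_sq lam z \<le> cmod (integral {0..a} g)"
    and "cmod (integral {0..a} g) \<le> M * (1 + (nu + 4) * (2 * (1 + d1) / nu)) / jbr_omega_sq lam z"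
proof -
  define w where "w = omega_sq nu lam z"
  define J where "J = jbr_omega_sq lam z"
  define k where "k = csqrt (w / of_real nu)"
  define c where "c = max 1 nu"
  define L where "L = 1 + (nu + 4) * (2 * (1 + d1) / nu)"
  note k = sector_csqrt_omega_sq[OF nu d1 d2 lam z, folded w_def k_def]
  have J_le: "J \<le> L * cmod w"
    unfolding J_def w_def L_def
    using jbr_omega_sq_le_norm_omega_sq[OF nu d1 z] sector_omega_sq_lower_bound[OF _ d1 d2 lam z] nu
    by simp
  have norm_le: "cmod w \<le> c * J"
    unfolding w_def c_def J_def using nu by (intro norm_omega_sq_le_jbr_omega_sq) simp
  have c: "c > 0" and L: "L > 0" and J: "J > 0"
    unfolding c_def L_def J_def using nu d1 by (simp_all add: add_pos_pos jbr_omega_sq_pos)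
  with J_le have "0 < L * cmod w"
    by linarith
  with L have w: "cmod w > 0"
    by (simp add: zero_less_mult_iff)
  have F: "m \<le> cmod (dirichlet_profile_integral a k)" "cmod (dirichlet_profile_integral a k) \<le> M"
    using F_bounds[OF less_imp_le[OF k(3)] k(2)] by auto
  have I: "cmod (integral {0..a} g) = cmod (dirichlet_profile_integral a k) / cmod w"
    using dirichlet_sol_integral(2)[OF a nu k(3,1)] g by (simp add: w_def norm_divide)
  have "m / c / J = m / (c * J)"
    by simp
  also have "\<dots> \<le> m / cmod w"
    using norm_le w m c J by (intro divide_left_mono mult_pos_pos) auto
  also have "\<dots> \<le> cmod (integral {0..a} g)"
    unfolding I using F(1) w by (simp add: divide_right_mono)
  finally show "m / max 1 nu / jbr_omega_sq lam z \<le> cmod (integral {0..a} g)"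
    by (simp add: J_def c_def)
  have "cmod (integral {0..a} g) \<le> M / cmod w"
    unfolding I using F(2) w by (simp add: divide_right_mono)
  also have "\<dots> \<le> M * L / J"
    using J_le J w F m L by (simp add: field_simps)
  finally show "cmod (integral {0..a} g) \<le> M * (1 + (nu + 4) * (2 * (1 + d1) / nu)) / jbr_omega_sq lam z"
    by (simp add: J_def L_def)
qed

text \<open>Only \<open>d2 < \<nu>/2\<close> is needed: together with \<open>|\<zeta>| \<ge> 1\<close> it keeps \<open>\<omega>\<^sup>2\<close> in a sector around the
  positive axis, uniformly away from the origin.\<close>

theorem lemma10:
  fixes a nu d1 d2 :: real
  assumes "a > 0" and "nu > 0" and "d1 > 0"
    and "d2 < min (nu * pi^2 / (2 * a^2)) (nu / 2)"
  shows "\<exists>C1 C2. C1 > 0 \<and> C2 > 0 \<and>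
    (\<forall>lam \<in> sectorS d1 d2. \<forall>z :: int \<times> int. z \<noteq> (0, 0) \<longrightarrow>
       (\<exists>g. dirichlet_sol a nu (omega_sq nu lam z) g) \<and>
       (\<forall>g. dirichlet_sol a nu (omega_sq nu lam z) g \<longrightarrow>
          C1 / jbr_omega_sq lam z \<le> cmod (integral {0..a} g) \<and>
          cmod (integral {0..a} g) \<le> C2 / jbr_omega_sq lam z))"
proof -
  note a = assms(1) and nu = assms(2) and d1 = assms(3)
  have d2: "d2 < nu / 2"
    using assms(4) by simp
  obtain m M where m: "0 < m" and M: "0 < M" and F_bounds:
    "\<And>k. Re k \<ge> 0 \<Longrightarrow> 1/2 \<le> Re (k^2) + d1 * \<bar>Im (k^2)\<bar> \<Longrightarrow>
       m \<le> cmod (dirichlet_profile_integral a k) \<and> cmod (dirichlet_profile_integral a k) \<le> M"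
    using dirichlet_profile_integral_bounds[OF a] by metis
  have "0 < (nu + 4) * (2 * (1 + d1) / nu)"
    using nu d1 by simp
  then show ?thesis
    using m M integral_dirichlet_sol_sector_bounds[OF a nu d1 d2 _ _ m F_bounds]
      dirichlet_sol_integral(1)[OF a nu sector_csqrt_omega_sq(3,1)[OF nu d1 d2]]
    by (intro exI[of _ "m / max 1 nu"] exI[of _ "M * (1 + (nu + 4) * (2 * (1 + d1) / nu))"])
      (auto intro: add_pos_pos)
qed

end
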